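(* Let $G$ be a finite group. Then $G$ is nested if and only if $K_\infty=G$.
   Context: All groups are finite. For $\chi\in\mathrm{Irr}(G)$, the center of $\chi$ is $Z(\chi)=\{g\in G : |\chi(g)|=\chi(1)\}$; equivalently $Z(\chi)/\ker(\chi)=Z(G/\ker(\chi))$. A group $G$ is nested if for all $\chi,\psi\in\mathrm{Irr}(G)$ either $Z(\chi)\le Z(\psi)$ or $Z(\psi)\le Z(\chi)$. For a nonabelian group $H$, let $\mathcal{X}_H=\{\chi\in\mathrm{Irr}(H) : Z(\chi)>Z(H)\}$ (strict containment) and define $K(H)=\bigcap_{\chi\in\mathcal{X}_H}\ker(\chi)$; if $H$ is abelian, set $K(H)=H$. Define normal subgroups $K_i$ of $G$ by $K_0=1$ and $K_{i+1}/K_{i}=K(G/K_{i})$ for $i\ge 0$. This ascending chain stabilizes; $K_\infty$ denotes its terminal term. *)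

theory Defs
  imports "HOL-Algebra.Coset" "Jordan_Normal_Form.Matrix"
begin

definition mat_trace :: "complex mat \<Rightarrow> complex" where
  "mat_trace A = (\<Sum>i<dim_row A. A $$ (i, i))"

definition is_rep :: "('a, 'b) monoid_scheme \<Rightarrow> nat \<Rightarrow> ('a \<Rightarrow> complex mat) \<Rightarrow> bool" where
  "is_rep G n \<rho> \<longleftrightarrow>
     (\<forall>g \<in> carrier G. \<rho> g \<in> carrier_mat n n) \<and>
     \<rho> \<one>\<^bsub>G\<^esub> = 1\<^sub>m n \<and>
     (\<forall>g \<in> carrier G. \<forall>h \<in> carrier G. \<rho> (g \<otimes>\<^bsub>G\<^esub> h) = \<rho> g * \<rho> h)"

definition invariant_subspace :: "('a, 'b) monoid_scheme \<Rightarrow> nat \<Rightarrow> ('a \<Rightarrow> complex mat) \<Rightarrow> complex vec set \<Rightarrow> bool" where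
  "invariant_subspace G n \<rho> W \<longleftrightarrow>
     W \<subseteq> carrier_vec n \<and> 0\<^sub>v n \<in> W \<and>
     (\<forall>v \<in> W. \<forall>w \<in> W. v + w \<in> W) \<and>
     (\<forall>c. \<forall>v \<in> W. c \<cdot>\<^sub>v v \<in> W) \<and>
     (\<forall>g \<in> carrier G. \<forall>v \<in> W. \<rho> g *\<^sub>v v \<in> W)"

definition irreducible_rep :: "('a, 'b) monoid_scheme \<Rightarrow> nat \<Rightarrow> ('a \<Rightarrow> complex mat) \<Rightarrow> bool" where
  "irreducible_rep G n \<rho> \<longleftrightarrow> is_rep G n \<rho> \<and> 0 < n \<and>
     (\<forall>W. invariant_subspace G n \<rho> W \<longrightarrow> W = {0\<^sub>v n} \<or> W = carrier_vec n)"

definition Irr :: "('a, 'b) monoid_scheme \<Rightarrow> ('a \<Rightarrow> complex) set" where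
  "Irr G = {\<chi>. \<exists>n \<rho>. irreducible_rep G n \<rho> \<and> \<chi> = (\<lambda>g \<in> carrier G. mat_trace (\<rho> g))}"

definition char_kernel :: "('a, 'b) monoid_scheme \<Rightarrow> ('a \<Rightarrow> complex) \<Rightarrow> 'a set" where
  "char_kernel G \<chi> = {g \<in> carrier G. \<chi> g = \<chi> \<one>\<^bsub>G\<^esub>}"

definition char_center :: "('a, 'b) monoid_scheme \<Rightarrow> ('a \<Rightarrow> complex) \<Rightarrow> 'a set" where
  "char_center G \<chi> = {g \<in> carrier G. cmod (\<chi> g) = cmod (\<chi> \<one>\<^bsub>G\<^esub>)}"

definition group_center :: "('a, 'b) monoid_scheme \<Rightarrow> 'a set" where
  "group_center G = {z \<in> carrier G. \<forall>g \<in> carrier G. z \<otimes>\<^bsub>G\<^esub> g = g \<otimes>\<^bsub>G\<^esub> z}"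

definition nested :: "('a, 'b) monoid_scheme \<Rightarrow> bool" where
  "nested G \<longleftrightarrow> (\<forall>\<chi> \<in> Irr G. \<forall>\<psi> \<in> Irr G.
      char_center G \<chi> \<subseteq> char_center G \<psi> \<or> char_center G \<psi> \<subseteq> char_center G \<chi>)"

definition is_abelian :: "('a, 'b) monoid_scheme \<Rightarrow> bool" where
  "is_abelian G \<longleftrightarrow> (\<forall>x \<in> carrier G. \<forall>y \<in> carrier G. x \<otimes>\<^bsub>G\<^esub> y = y \<otimes>\<^bsub>G\<^esub> x)"

text \<open>K(H): intersection of the kernels of all chi in Irr(H) with Z(chi) > Z(H);
  H itself if H is abelian (the empty intersection is also H).\<close>
definition K_sub :: "('a, 'b) monoid_scheme \<Rightarrow> 'a set" where
  "K_sub H = (if is_abelian H then carrier H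
     else carrier H \<inter> (\<Inter>\<chi> \<in> {\<chi> \<in> Irr H. group_center H \<subset> char_center H \<chi>}. char_kernel H \<chi>))"

text \<open>K_0 = 1, and K_{i+1} is the preimage in G of K(G/K_i), i.e. the union of the
  cosets of K_i lying in K(G/K_i).\<close>
primrec K_chain :: "('a, 'b) monoid_scheme \<Rightarrow> nat \<Rightarrow> 'a set" where
  "K_chain G 0 = {\<one>\<^bsub>G\<^esub>}"
| "K_chain G (Suc i) = \<Union> (K_sub (G Mod K_chain G i))"

text \<open>The terminal term of the ascending chain (K_i).\<close>
definition K_infty :: "('a, 'b) monoid_scheme \<Rightarrow> 'a set" where
  "K_infty G = (\<Union>i. K_chain G i)"

end

theory Submission
  imports Defs "Jordan_Normal_Form.Spectral_Radius" "HOL-Algebra.Multiplicative_Group"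
begin

(* Let rho afford chi in Irr G. Since rho g has finite order, it is triangularisable with roots of
   unity on the diagonal; |chi g| = chi 1 forces them to coincide, and a matrix of finite order that
   is scalar plus nilpotent is scalar (characteristic 0). So g lies in Z(chi) iff rho g is a scalar
   matrix. Hence every commutator [a, b] with a in Z(chi) lies in ker chi, and Z(G) <= Z(chi) by
   Schur's lemma.

   Inflation identifies Irr(G/N) with the irreducible characters of G whose kernel contains N,
   respecting centres; so G/N is nested iff these characters have pairwise comparable centres.

   If G is nested and nonabelian, the characters in X_G have a least centre Z(psi) > Z(G); an
   element a of Z(psi) outside Z(G) and some b not commuting with a give a nontrivial commutator in
   K(G). Applied to G/K_i, this makes the chain grow strictly until it reaches G. Conversely, every
   character outside X_H has the least possible centre Z(H), while those in X_H are inflated from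
   H/K(H); so H is nested as soon as H/K(H) is, and descending the chain from G/K_n = G/G shows that
   G is nested. *)

lemma mat_trace_mult_comm:
  assumes "A \<in> carrier_mat n m" "B \<in> carrier_mat m n"
  shows "mat_trace (A * B) = mat_trace (B * A)"
proof -
  have "mat_trace (A * B) = (\<Sum>i<n. \<Sum>l<m. A $$ (i, l) * B $$ (l, i))"
    using assms unfolding mat_trace_def by (auto simp: scalar_prod_def atLeast0LessThan intro!: sum.cong)
  also have "\<dots> = (\<Sum>l<m. \<Sum>i<n. B $$ (l, i) * A $$ (i, l))"
    by (subst sum.swap) (simp add: mult.commute)
  also have "\<dots> = mat_trace (B * A)"
    using assms unfolding mat_trace_def by (auto simp: scalar_prod_def atLeast0LessThan intro!: sum.cong)
  finally show ?thesis .
qed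

lemma mat_trace_smult_one [simp]: "mat_trace (c \<cdot>\<^sub>m 1\<^sub>m n) = c * of_nat n"
  unfolding mat_trace_def by simp

lemma mat_trace_one [simp]: "mat_trace (1\<^sub>m n) = of_nat n"
  unfolding mat_trace_def by simp

lemma unit_summands_eq_if_cmod_sum_eq_card:
  fixes z :: "'i \<Rightarrow> complex"
  assumes "finite I" and unit: "\<And>j. j \<in> I \<Longrightarrow> cmod (z j) = 1"
    and sum: "cmod (\<Sum>j\<in>I. z j) = card I" and "i \<in> I"
  shows "z i = (\<Sum>j\<in>I. z j) / of_nat (card I)"
proof -
  define S where "S = (\<Sum>j\<in>I. z j)"
  (* Rotating by mu makes the real parts of the summands, each at most 1, add up to card I. *)
  define \<mu> where "\<mu> = cnj S / of_nat (card I)"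
  have n: "card I > 0" using assms card_gt_0_iff by blast
  have \<mu>: "cmod \<mu> = 1" using sum n unfolding \<mu>_def norm_divide complex_mod_cnj S_def by simp
  have Re_le: "Re (\<mu> * z j) \<le> 1" if "j \<in> I" for j
    using complex_Re_le_cmod[of "\<mu> * z j"] unit[OF that] \<mu> by (simp add: norm_mult)
  have "(\<Sum>j\<in>I. Re (\<mu> * z j)) = Re (\<mu> * S)"
    by (simp add: S_def sum_distrib_left)
  also have "\<mu> * S = of_real ((cmod S)\<^sup>2 / card I)"
    using complex_norm_square[of S] by (simp add: \<mu>_def mult.commute)
  also have "Re \<dots> = card I" using sum n by (simp add: S_def power2_eq_square)
  finally have "(\<Sum>j\<in>I. 1 - Re (\<mu> * z j)) = 0" by (simp add: sum_subtractf)
  then have "Re (\<mu> * z j) = 1" if "j \<in> I" for j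
    using sum_nonneg_eq_0_iff[of I "\<lambda>j. 1 - Re (\<mu> * z j)"] Re_le that \<open>finite I\<close> by auto
  moreover have "cmod (\<mu> * z j) = 1" if "j \<in> I" for j using \<mu> unit[OF that] by (simp add: norm_mult)
  ultimately have "\<mu> * z i = 1"
    using \<open>i \<in> I\<close> cmod_power2[of "\<mu> * z i"] by (simp add: complex_eq_iff)
  then have "cnj S * z i = of_nat (card I)" using n by (simp add: \<mu>_def field_simps)
  moreover have "S * cnj S = of_nat (card I) * of_nat (card I)"
    using sum complex_norm_square[of S] by (simp add: S_def power2_eq_square)
  ultimately have "of_nat (card I) * of_nat (card I) * z i = S * of_nat (card I)"
    by (metis mult.assoc)
  then show ?thesis using n by (simp add: S_def field_simps)
qed

lemma eigenvalue_pow_eq_one: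
  fixes A :: "'a::field mat"
  assumes A: "A \<in> carrier_mat n n" and "A ^\<^sub>m m = 1\<^sub>m n" and "eigenvalue A e"
  shows "e ^ m = 1"
proof -
  obtain v where v: "eigenvector A v e" using \<open>eigenvalue A e\<close> unfolding eigenvalue_def by auto
  then have "v \<in> carrier_vec n" "v \<noteq> 0\<^sub>v n" using A unfolding eigenvector_def by auto
  then obtain k where k: "k < n" "v $ k \<noteq> 0" by (metis eq_vecI index_zero_vec carrier_vecD)
  have "v = e ^ m \<cdot>\<^sub>v v"
    using eigenvector_pow[OF A v, of m] \<open>A ^\<^sub>m m = 1\<^sub>m n\<close> \<open>v \<in> carrier_vec n\<close> by simp
  then have "v $ k = e ^ m * v $ k" using k \<open>v \<in> carrier_vec n\<close> by (metis index_smult_vec(1) carrier_vecD)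
  then show ?thesis using k(2) by simp
qed

definition zero_below_superdiag :: "nat \<Rightarrow> 'a::zero mat \<Rightarrow> bool" where
  "zero_below_superdiag d M \<longleftrightarrow> (\<forall>i<dim_row M. \<forall>j<dim_col M. j < i + d \<longrightarrow> M $$ (i, j) = 0)"

lemma zero_below_superdiag_mult:
  fixes M M' :: "'a::semiring_0 mat"
  assumes "M \<in> carrier_mat n n" "M' \<in> carrier_mat n n"
    and "zero_below_superdiag d M" "zero_below_superdiag e M'"
  shows "zero_below_superdiag (d + e) (M * M')"
  unfolding zero_below_superdiag_def
proof (intro allI impI)
  fix i j assume ij: "i < dim_row (M * M')" "j < dim_col (M * M')" "j < i + (d + e)"
  have "M $$ (i, l) * M' $$ (l, j) = 0" if "l < n" for l
    using assms ij that unfolding zero_below_superdiag_def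
    by (cases "l < i + d") (auto simp: not_less)
  then show "(M * M') $$ (i, j) = 0"
    using assms ij by (auto simp: scalar_prod_def intro!: sum.neutral)
qed

lemma zero_below_superdiag_pow:
  assumes "N \<in> carrier_mat n n" "zero_below_superdiag 1 N"
  shows "zero_below_superdiag k (N ^\<^sub>m k)"
proof (induction k)
  case 0
  show ?case unfolding zero_below_superdiag_def by simp
next
  case (Suc k)
  then show ?case using zero_below_superdiag_mult[of "N ^\<^sub>m k" n N k 1] assms by simp
qed

lemma strictly_upper_triangular_nilpotent:
  assumes "N \<in> carrier_mat n n" "zero_below_superdiag 1 N"
  shows "N ^\<^sub>m n = 0\<^sub>m n n"
  using zero_below_superdiag_pow[OF assms, of n] assms(1)
  unfolding zero_below_superdiag_def by (auto intro!: eq_matI)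

lemma mult_pow_scalar_plus_nilpotent:
  fixes X N :: "'a::comm_ring_1 mat"
  assumes X: "X \<in> carrier_mat n n" and N: "N \<in> carrier_mat n n" and XNN: "X * N * N = 0\<^sub>m n n"
  shows "X * (c \<cdot>\<^sub>m 1\<^sub>m n + N) ^\<^sub>m j = c ^ j \<cdot>\<^sub>m X + (of_nat j * c ^ (j - 1)) \<cdot>\<^sub>m (X * N)"
proof (induction j)
  case 0
  show ?case using X N by (auto intro!: eq_matI)
next
  case (Suc j)
  define B where "B = c \<cdot>\<^sub>m 1\<^sub>m n + N"
  define Y where "Y = X * N"
  define a where "a = of_nat j * c ^ (j - 1)"
  have B: "B \<in> carrier_mat n n" and Y: "Y \<in> carrier_mat n n" using X N by (auto simp: B_def Y_def)
  have XB: "c ^ j \<cdot>\<^sub>m X + a \<cdot>\<^sub>m Y \<in> carrier_mat n n" using X Y by simp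
  have "X * B ^\<^sub>m Suc j = (X * B ^\<^sub>m j) * B"
    using X B by (simp add: assoc_mult_mat[of X n n _ n B n])
  also have "\<dots> = (c ^ j \<cdot>\<^sub>m X + a \<cdot>\<^sub>m Y) * (c \<cdot>\<^sub>m 1\<^sub>m n + N)"
    using Suc unfolding B_def Y_def a_def by simp
  also have "\<dots> = (c ^ j \<cdot>\<^sub>m X + a \<cdot>\<^sub>m Y) * (c \<cdot>\<^sub>m 1\<^sub>m n) + (c ^ j \<cdot>\<^sub>m X + a \<cdot>\<^sub>m Y) * N"
    by (rule mult_add_distrib_mat[OF XB]) (use N in auto)
  also have "\<dots> = c \<cdot>\<^sub>m (c ^ j \<cdot>\<^sub>m X + a \<cdot>\<^sub>m Y) + (c ^ j \<cdot>\<^sub>m Y + a \<cdot>\<^sub>m (Y * N))"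
    using X Y N XB unfolding Y_def
    by (simp add: add_mult_distrib_mat[of _ n n _ N n] mult_smult_assoc_mat[of _ n n N n] mult_smult_distrib[of _ n n _ n])
  also have "\<dots> = c ^ Suc j \<cdot>\<^sub>m X + (of_nat (Suc j) * c ^ j) \<cdot>\<^sub>m Y"
    using X Y XNN unfolding Y_def[symmetric] a_def by (cases j) (auto intro!: eq_matI simp: algebra_simps)
  finally show ?case unfolding B_def Y_def by simp
qed

lemma nilpotent_eq_zero_if_pow_scalar_plus_eq_one:
  fixes N :: "'a::field_char_0 mat"
  assumes N: "N \<in> carrier_mat n n" and nil: "N ^\<^sub>m k = 0\<^sub>m n n"
    and pow: "(c \<cdot>\<^sub>m 1\<^sub>m n + N) ^\<^sub>m m = 1\<^sub>m n" and "c ^ m = 1" and "m > 0"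
  shows "N = 0\<^sub>m n n"
proof -
  have "of_nat m * c ^ (m - 1) \<noteq> 0" using \<open>c ^ m = 1\<close> \<open>m > 0\<close> by (auto simp: power_0_left)
  (* For X = N^i, expanding X (c I + N)^m = X leaves m c^(m-1) N^(i+1) = 0. *)
  have descent: "N ^\<^sub>m Suc i = 0\<^sub>m n n" if "N ^\<^sub>m Suc (Suc i) = 0\<^sub>m n n" for i
  proof -
    define X where "X = N ^\<^sub>m i"
    have X: "X \<in> carrier_mat n n" using N by (simp add: X_def)
    have "X * N * N = 0\<^sub>m n n" using that by (simp add: X_def)
    from mult_pow_scalar_plus_nilpotent[OF X N this, of c m]
    have expand: "X = c ^ m \<cdot>\<^sub>m X + (of_nat m * c ^ (m - 1)) \<cdot>\<^sub>m (X * N)"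
      using pow X by simp
    have "X * N = 0\<^sub>m n n"
    proof (rule eq_matI)
      fix r l assume "r < dim_row (0\<^sub>m n n :: 'a mat)" "l < dim_col (0\<^sub>m n n :: 'a mat)"
      then have "X $$ (r, l) = X $$ (r, l) + (of_nat m * c ^ (m - 1)) * (X * N) $$ (r, l)"
        using arg_cong[OF expand, of "\<lambda>M. M $$ (r, l)"] X N \<open>c ^ m = 1\<close> by simp
      then show "(X * N) $$ (r, l) = 0\<^sub>m n n $$ (r, l)"
        using \<open>of_nat m * c ^ (m - 1) \<noteq> 0\<close> \<open>r < _\<close> \<open>l < _\<close> by auto
    qed (use X N in auto)
    then show ?thesis by (simp add: X_def)
  qed
  have "N ^\<^sub>m Suc i = 0\<^sub>m n n \<Longrightarrow> N ^\<^sub>m 1 = 0\<^sub>m n n" for i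
    by (induction i) (use descent in auto)
  moreover have "N ^\<^sub>m Suc k = 0\<^sub>m n n" using nil N by simp
  ultimately show ?thesis using N by simp
qed

lemma upper_triangular_diag_pow_eq_one:
  fixes B :: "'a::field mat"
  assumes B: "B \<in> carrier_mat n n" "upper_triangular B" and "B ^\<^sub>m m = 1\<^sub>m n" and "i < n"
  shows "B $$ (i, i) ^ m = 1"
proof -
  have "B $$ (i, i) \<in> set (diag_mat B)" using B \<open>i < n\<close> unfolding diag_mat_def by auto
  then have "eigenvalue B (B $$ (i, i))"
    using char_poly_upper_triangular[OF B] eigenvalue_root_char_poly[OF B(1)]
    by (auto simp: poly_prod_list prod_list_zero_iff)
  then show ?thesis by (rule eigenvalue_pow_eq_one[OF B(1) \<open>B ^\<^sub>m m = 1\<^sub>m n\<close>])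
qed

lemma upper_triangular_eq_scalar_if_pow_eq_one:
  fixes B :: "'a::field_char_0 mat"
  assumes B: "B \<in> carrier_mat n n" "upper_triangular B" and "B ^\<^sub>m m = 1\<^sub>m n" and "m > 0"
    and diag: "\<And>i. i < n \<Longrightarrow> B $$ (i, i) = c" and "c ^ m = 1"
  shows "B = c \<cdot>\<^sub>m 1\<^sub>m n"
proof -
  define N where "N = B - c \<cdot>\<^sub>m 1\<^sub>m n"
  have N: "N \<in> carrier_mat n n" using B unfolding N_def carrier_mat_def by auto
  have "zero_below_superdiag 1 N"
    using B diag unfolding zero_below_superdiag_def N_def upper_triangular_def
    by (auto simp: less_Suc_eq)
  then have "N ^\<^sub>m n = 0\<^sub>m n n" by (rule strictly_upper_triangular_nilpotent[OF N])
  moreover have "c \<cdot>\<^sub>m 1\<^sub>m n + N = B" using B by (auto simp: N_def intro!: eq_matI)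
  ultimately have "N = 0\<^sub>m n n"
    using nilpotent_eq_zero_if_pow_scalar_plus_eq_one[OF N _ _ \<open>c ^ m = 1\<close> \<open>m > 0\<close>]
      \<open>B ^\<^sub>m m = 1\<^sub>m n\<close> by simp
  then show ?thesis using \<open>c \<cdot>\<^sub>m 1\<^sub>m n + N = B\<close> by simp
qed

lemma mat_trace_similar_mat_wit:
  assumes "A \<in> carrier_mat n n" and "similar_mat_wit A B P Q"
  shows "mat_trace A = mat_trace B"
proof -
  from similar_mat_witD2[OF assms] have P: "P \<in> carrier_mat n n" and B: "B \<in> carrier_mat n n"
    and Q: "Q \<in> carrier_mat n n" and "Q * P = 1\<^sub>m n" and "A = P * B * Q" by auto
  then have "mat_trace A = mat_trace (Q * (P * B))"
    by (metis mat_trace_mult_comm mult_carrier_mat)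
  also have "\<dots> = mat_trace B"
    using P B Q \<open>Q * P = 1\<^sub>m n\<close> by (simp add: assoc_mult_mat[of Q n n P n B n, symmetric])
  finally show ?thesis .
qed

lemma scalar_mat_if_pow_eq_one_and_cmod_trace:
  fixes A :: "complex mat"
  assumes A: "A \<in> carrier_mat n n" and "m > 0" and Am: "A ^\<^sub>m m = 1\<^sub>m n"
    and tr: "cmod (mat_trace A) = n"
  shows "\<exists>c. A = c \<cdot>\<^sub>m 1\<^sub>m n"
proof (cases "n = 0")
  case True
  then show ?thesis using A by (auto intro!: eq_matI)
next
  case False
  obtain es where "char_poly A = (\<Prod>a\<leftarrow>es. [:- a, 1:])" using char_poly_factorized[OF A] by blast
  then obtain B where B: "B \<in> carrier_mat n n" "upper_triangular B" and "similar_mat A B"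
    using schur_decomposition_exists[OF A] by blast
  then obtain P Q where sim: "similar_mat_wit A B P Q" unfolding similar_mat_def by blast
  then have P: "P \<in> carrier_mat n n" and Q: "Q \<in> carrier_mat n n" and "P * Q = 1\<^sub>m n"
    and "Q * P = 1\<^sub>m n" and "A = P * B * Q"
    using similar_mat_witD2[OF A sim] by auto
  have Bm: "B ^\<^sub>m m = 1\<^sub>m n"
    using similar_mat_wit_pow_id[OF similar_mat_wit_sym[OF sim], of m] Am P Q \<open>Q * P = 1\<^sub>m n\<close> by simp
  note diag_root = upper_triangular_diag_pow_eq_one[OF B Bm]
  have trB: "mat_trace A = (\<Sum>i\<in>{..<n}. B $$ (i, i))"
    using mat_trace_similar_mat_wit[OF A sim] B unfolding mat_trace_def by simp
  have unit: "cmod (B $$ (i, i)) = 1" if "i < n" for i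
    using diag_root[OF that] \<open>m > 0\<close> power_eq_1_iff by fastforce
  define c where "c = mat_trace A / of_nat n"
  have diag: "B $$ (i, i) = c" if "i < n" for i
  proof -
    have "B $$ (i, i) = (\<Sum>j\<in>{..<n}. B $$ (j, j)) / of_nat (card {..<n})"
      by (rule unit_summands_eq_if_cmod_sum_eq_card) (use unit tr trB that in auto)
    then show ?thesis using trB by (simp add: c_def)
  qed
  moreover have "c ^ m = 1" using diag_root[of 0] diag[of 0] False by simp
  ultimately have "B = c \<cdot>\<^sub>m 1\<^sub>m n"
    using upper_triangular_eq_scalar_if_pow_eq_one[OF B Bm \<open>m > 0\<close>] by blast
  then have "A = c \<cdot>\<^sub>m (P * Q)"
    using \<open>A = P * B * Q\<close> P Q
    by (simp add: mult_smult_distrib[of P n n _ n] mult_smult_assoc_mat[of _ n n Q n])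
  then show ?thesis using \<open>P * Q = 1\<^sub>m n\<close> by auto
qed

lemma chain_reaches_finite_bound:
  fixes f :: "nat \<Rightarrow> 'a set"
  assumes "finite S" and "\<And>i. f i \<subseteq> S" and "\<And>i. f i \<subseteq> f (Suc i)"
    and grow: "\<And>i. f i \<noteq> S \<Longrightarrow> f i \<subset> f (Suc i)"
  shows "f (card S) = S"
proof -
  have "f i = S \<or> i \<le> card (f i)" for i
  proof (induction i)
    case (Suc i)
    show ?case
    proof (cases "f i = S")
      case True
      then show ?thesis using assms(2)[of "Suc i"] assms(3)[of i] by simp
    next
      case False
      have "card (f i) < card (f (Suc i))"
        by (rule psubset_card_mono[OF finite_subset[OF assms(2) assms(1)] grow[OF False]])
      then show ?thesis using Suc False by simp
    qed
  qed simp
  then show ?thesis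
    using card_seteq[OF assms(1) assms(2), of "card S"] by blast
qed

lemma is_repD:
  assumes "is_rep G n \<rho>"
  shows "\<And>g. g \<in> carrier G \<Longrightarrow> \<rho> g \<in> carrier_mat n n" and "\<rho> \<one>\<^bsub>G\<^esub> = 1\<^sub>m n"
    and "\<And>g h. g \<in> carrier G \<Longrightarrow> h \<in> carrier G \<Longrightarrow> \<rho> (g \<otimes>\<^bsub>G\<^esub> h) = \<rho> g * \<rho> h"
  using assms unfolding is_rep_def by auto

lemma irreducible_repD:
  assumes "irreducible_rep G n \<rho>"
  shows "is_rep G n \<rho>" and "0 < n"
  using assms unfolding irreducible_rep_def by auto

lemma IrrE:
  assumes "\<chi> \<in> Irr G"
  obtains n \<rho> where "irreducible_rep G n \<rho>" and "\<chi> = (\<lambda>g \<in> carrier G. mat_trace (\<rho> g))"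
  using assms unfolding Irr_def by blast

lemma irreducible_rep_cong_image:
  assumes "irreducible_rep G n \<rho>" and "is_rep H n \<sigma>" and "\<rho> ` carrier G = \<sigma> ` carrier H"
  shows "irreducible_rep H n \<sigma>"
proof -
  have "invariant_subspace G n \<rho> W \<longleftrightarrow> invariant_subspace H n \<sigma> W" for W
  proof -
    have "(\<forall>g\<in>carrier G. \<forall>v\<in>W. \<rho> g *\<^sub>v v \<in> W) \<longleftrightarrow> (\<forall>M\<in>\<rho> ` carrier G. \<forall>v\<in>W. M *\<^sub>v v \<in> W)"
      by blast
    also have "\<dots> \<longleftrightarrow> (\<forall>h\<in>carrier H. \<forall>v\<in>W. \<sigma> h *\<^sub>v v \<in> W)"
      unfolding assms(3) by blast
    finally show ?thesis unfolding invariant_subspace_def by simp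
  qed
  then show ?thesis using assms(1,2) unfolding irreducible_rep_def by simp
qed

lemma irreducible_rep_comp_surj_hom:
  assumes "group_hom G H f" and "f ` carrier G = carrier H" and "irreducible_rep H n \<sigma>"
  shows "irreducible_rep G n (\<sigma> \<circ> f)"
proof -
  interpret group_hom G H f by fact
  have "is_rep G n (\<sigma> \<circ> f)"
    using is_repD[OF irreducible_repD(1)[OF assms(3)]] unfolding is_rep_def by auto
  moreover have "\<sigma> ` carrier H = (\<sigma> \<circ> f) ` carrier G"
    using assms(2) image_image[of \<sigma> f "carrier G"] by simp
  ultimately show ?thesis using irreducible_rep_cong_image[OF assms(3)] by blast
qed

context group
begin

lemma rep_pow:
  assumes "is_rep G n \<rho>" and "g \<in> carrier G"
  shows "\<rho> (g [^] (k::nat)) = \<rho> g ^\<^sub>m k"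
proof (induction k)
  case 0
  show ?case using is_repD(1)[OF assms] is_repD(2)[OF assms(1)] by simp
next
  case (Suc k)
  then show ?case using is_repD(3)[OF assms(1), of "g [^] k" g] assms(2) by simp
qed

lemma rep_pow_ord:
  assumes "is_rep G n \<rho>" and "g \<in> carrier G"
  shows "\<rho> g ^\<^sub>m ord g = 1\<^sub>m n"
  using rep_pow[OF assms, of "ord g"] is_repD(2)[OF assms(1)] assms(2) by simp

lemma rep_scalar_if_cmod_trace:
  assumes "finite (carrier G)" and "is_rep G n \<rho>" and "g \<in> carrier G"
    and "cmod (mat_trace (\<rho> g)) = n"
  shows "\<exists>c. \<rho> g = c \<cdot>\<^sub>m 1\<^sub>m n"
  using ord_ge_1[OF assms(1,3)]
  by (intro scalar_mat_if_pow_eq_one_and_cmod_trace[OF is_repD(1)[OF assms(2,3)] _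
        rep_pow_ord[OF assms(2,3)] assms(4)]) simp

lemma rep_eq_one_if_trace:
  assumes "finite (carrier G)" and "is_rep G n \<rho>" and "g \<in> carrier G"
    and "mat_trace (\<rho> g) = n"
  shows "\<rho> g = 1\<^sub>m n"
proof -
  obtain c where c: "\<rho> g = c \<cdot>\<^sub>m 1\<^sub>m n"
    using rep_scalar_if_cmod_trace[OF assms(1-3)] assms(4) by auto
  then have "c * n = n" using assms(4) by simp
  then show ?thesis using c by (cases "n = 0") (auto intro!: eq_matI)
qed

lemma rep_mult_inv:
  assumes "is_rep G n \<rho>" and "g \<in> carrier G"
  shows "\<rho> g * \<rho> (inv g) = 1\<^sub>m n" and "\<rho> (inv g) * \<rho> g = 1\<^sub>m n"
proof -
  have "\<rho> g * \<rho> (inv g) = \<rho> (g \<otimes> inv g)" and "\<rho> (inv g) * \<rho> g = \<rho> (inv g \<otimes> g)"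
    by (rule is_repD(3)[OF assms(1), symmetric]; use assms(2) in simp)+
  then show "\<rho> g * \<rho> (inv g) = 1\<^sub>m n" and "\<rho> (inv g) * \<rho> g = 1\<^sub>m n"
    using is_repD(2)[OF assms(1)] assms(2) by simp_all
qed

lemma rep_kernel_normal:
  assumes "is_rep G n \<rho>"
  shows "{g \<in> carrier G. \<rho> g = 1\<^sub>m n} \<lhd> G"
proof -
  note \<rho> = is_repD[OF assms]
  show ?thesis unfolding normal_inv_iff
  proof (intro conjI subgroupI ballI)
    show "{g \<in> carrier G. \<rho> g = 1\<^sub>m n} \<noteq> {}" using \<rho>(2) by blast
  next
    fix a b assume "a \<in> {g \<in> carrier G. \<rho> g = 1\<^sub>m n}" "b \<in> {g \<in> carrier G. \<rho> g = 1\<^sub>m n}"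
    then show "a \<otimes> b \<in> {g \<in> carrier G. \<rho> g = 1\<^sub>m n}" using \<rho>(3)[of a b] by simp
  next
    fix a assume "a \<in> {g \<in> carrier G. \<rho> g = 1\<^sub>m n}"
    then show "inv a \<in> {g \<in> carrier G. \<rho> g = 1\<^sub>m n}"
      using rep_mult_inv(2)[OF assms, of a] \<rho>(1)[of "inv a"] by simp
  next
    fix x h assume x: "x \<in> carrier G" and "h \<in> {g \<in> carrier G. \<rho> g = 1\<^sub>m n}"
    then have "\<rho> (x \<otimes> h \<otimes> inv x) = \<rho> x * \<rho> (inv x)"
      using \<rho>(1)[of x] \<rho>(3)[of "x \<otimes> h" "inv x"] \<rho>(3)[of x h] by simp
    then show "x \<otimes> h \<otimes> inv x \<in> {g \<in> carrier G. \<rho> g = 1\<^sub>m n}"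
      using rep_mult_inv(1)[OF assms x] \<open>h \<in> _\<close> x by simp
  qed blast
qed

lemma invariant_subspace_central_eigenspace:
  assumes "is_rep G n \<rho>" and g: "g \<in> carrier G" and central: "\<And>h. h \<in> carrier G \<Longrightarrow> g \<otimes> h = h \<otimes> g"
  shows "invariant_subspace G n \<rho> {w \<in> carrier_vec n. \<rho> g *\<^sub>v w = e \<cdot>\<^sub>v w}"
  unfolding invariant_subspace_def
proof (intro conjI ballI allI)
  note \<rho> = is_repD[OF assms(1)]
  have A: "\<rho> g \<in> carrier_mat n n" using \<rho>(1) g by blast
  fix h v assume h: "h \<in> carrier G" and v: "v \<in> {w \<in> carrier_vec n. \<rho> g *\<^sub>v w = e \<cdot>\<^sub>v w}"
  have H: "\<rho> h \<in> carrier_mat n n" using \<rho>(1) h by blast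
  have "\<rho> g *\<^sub>v (\<rho> h *\<^sub>v v) = (\<rho> h * \<rho> g) *\<^sub>v v"
    using \<rho>(3)[OF g h] \<rho>(3)[OF h g] central[OF h] A H v by (simp add: assoc_mult_mat_vec)
  also have "\<dots> = e \<cdot>\<^sub>v (\<rho> h *\<^sub>v v)" using A H v by (auto simp: assoc_mult_mat_vec mult_mat_vec)
  finally show "\<rho> h *\<^sub>v v \<in> {w \<in> carrier_vec n. \<rho> g *\<^sub>v w = e \<cdot>\<^sub>v w}" using H v by simp
qed (use is_repD(1)[OF assms(1) g] in
      \<open>auto simp: mult_add_distrib_mat_vec smult_add_distrib_vec mult_mat_vec smult_smult_assoc mult.commute\<close>)

lemma central_rep_eq_smult_eigenvalue:
  assumes irr: "irreducible_rep G n \<rho>" and g: "g \<in> carrier G"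
    and central: "\<And>h. h \<in> carrier G \<Longrightarrow> g \<otimes> h = h \<otimes> g" and "eigenvalue (\<rho> g) e"
  shows "\<rho> g = e \<cdot>\<^sub>m 1\<^sub>m n"
proof -
  have A: "\<rho> g \<in> carrier_mat n n" using is_repD(1)[OF irreducible_repD(1)[OF irr] g] .
  obtain v where "eigenvector (\<rho> g) v e"
    using \<open>eigenvalue (\<rho> g) e\<close> unfolding eigenvalue_def by blast
  then have "v \<in> {w \<in> carrier_vec n. \<rho> g *\<^sub>v w = e \<cdot>\<^sub>v w}" "v \<noteq> 0\<^sub>v n"
    using A unfolding eigenvector_def by auto
  then have "{w \<in> carrier_vec n. \<rho> g *\<^sub>v w = e \<cdot>\<^sub>v w} = carrier_vec n"
    using invariant_subspace_central_eigenspace[OF irreducible_repD(1)[OF irr] g central] irr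
    unfolding irreducible_rep_def by blast
  then have eigen: "\<rho> g *\<^sub>v w = e \<cdot>\<^sub>v w" if "w \<in> carrier_vec n" for w
    using that by blast
  show ?thesis
  proof (rule eq_matI)
    fix i j assume "i < dim_row (e \<cdot>\<^sub>m 1\<^sub>m n)" "j < dim_col (e \<cdot>\<^sub>m (1\<^sub>m n :: complex mat))"
    then show "\<rho> g $$ (i, j) = (e \<cdot>\<^sub>m 1\<^sub>m n) $$ (i, j)"
      using arg_cong[OF eigen[of "unit_vec n j"], of "\<lambda>w. w $ i"] A by auto
  qed (use A in auto)
qed

lemma char_kernel_eq_rep_kernel:
  assumes "finite (carrier G)" and "is_rep G n \<rho>"
  shows "char_kernel G (\<lambda>g \<in> carrier G. mat_trace (\<rho> g)) = {g \<in> carrier G. \<rho> g = 1\<^sub>m n}"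
proof -
  have "mat_trace (\<rho> g) = mat_trace (\<rho> \<one>) \<longleftrightarrow> \<rho> g = 1\<^sub>m n" if "g \<in> carrier G" for g
  proof
    assume "mat_trace (\<rho> g) = mat_trace (\<rho> \<one>)"
    then show "\<rho> g = 1\<^sub>m n" using rep_eq_one_if_trace[OF assms that] is_repD(2)[OF assms(2)] by simp
  qed (simp add: is_repD(2)[OF assms(2)])
  then show ?thesis unfolding char_kernel_def by auto
qed

lemma char_kernel_normal:
  assumes "finite (carrier G)" and "\<chi> \<in> Irr G"
  shows "char_kernel G \<chi> \<lhd> G"
  using assms(2)
proof (rule IrrE)
  fix n \<rho> assume irr: "irreducible_rep G n \<rho>" and \<chi>: "\<chi> = (\<lambda>g \<in> carrier G. mat_trace (\<rho> g))"
  show ?thesis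
    unfolding \<chi> char_kernel_eq_rep_kernel[OF assms(1) irreducible_repD(1)[OF irr]]
    by (rule rep_kernel_normal[OF irreducible_repD(1)[OF irr]])
qed

lemma commutator_mem_char_kernel:
  assumes "finite (carrier G)" and "\<chi> \<in> Irr G"
    and a: "a \<in> char_center G \<chi>" and b: "b \<in> carrier G"
  shows "a \<otimes> b \<otimes> inv (b \<otimes> a) \<in> char_kernel G \<chi>"
  using assms(2)
proof (rule IrrE)
  fix n \<rho> assume irr: "irreducible_rep G n \<rho>" and \<chi>: "\<chi> = (\<lambda>g \<in> carrier G. mat_trace (\<rho> g))"
  note rep = irreducible_repD(1)[OF irr] and \<rho> = is_repD[OF irreducible_repD(1)[OF irr]]
  have "a \<in> carrier G" using a unfolding char_center_def by simp
  then obtain c where c: "\<rho> a = c \<cdot>\<^sub>m 1\<^sub>m n"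
    using rep_scalar_if_cmod_trace[OF assms(1) rep] a \<rho>(2) unfolding \<chi> char_center_def by auto
  have "\<rho> (a \<otimes> b) = \<rho> (b \<otimes> a)"
    using \<rho>(3)[OF \<open>a \<in> carrier G\<close> b] \<rho>(3)[OF b \<open>a \<in> carrier G\<close>] \<rho>(1)[OF b] c
    by (simp add: mult_smult_assoc_mat[of _ n n _ n] mult_smult_distrib[of _ n n _ n])
  then have "\<rho> (a \<otimes> b \<otimes> inv (b \<otimes> a)) = \<rho> (b \<otimes> a) * \<rho> (inv (b \<otimes> a))"
    using \<rho>(3)[of "a \<otimes> b" "inv (b \<otimes> a)"] \<open>a \<in> carrier G\<close> b by simp
  also have "\<dots> = 1\<^sub>m n" using rep_mult_inv(1)[OF rep, of "b \<otimes> a"] \<open>a \<in> carrier G\<close> b by simp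
  finally show ?thesis
    unfolding \<chi> char_kernel_eq_rep_kernel[OF assms(1) rep] using \<open>a \<in> carrier G\<close> b \<rho>(2) by simp
qed

lemma group_center_subset_char_center:
  assumes "finite (carrier G)" and "\<chi> \<in> Irr G"
  shows "group_center G \<subseteq> char_center G \<chi>"
  using assms(2)
proof (rule IrrE)
  fix n \<rho> assume irr: "irreducible_rep G n \<rho>" and \<chi>: "\<chi> = (\<lambda>g \<in> carrier G. mat_trace (\<rho> g))"
  note rep = irreducible_repD(1)[OF irr] and \<rho> = is_repD[OF irreducible_repD(1)[OF irr]]
  show ?thesis
  proof
    fix g assume "g \<in> group_center G"
    then have g: "g \<in> carrier G" and central: "\<And>h. h \<in> carrier G \<Longrightarrow> g \<otimes> h = h \<otimes> g"
      unfolding group_center_def by auto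
    obtain e where "eigenvalue (\<rho> g) e"
      using spectrum_non_empty[OF \<rho>(1)[OF g] irreducible_repD(2)[OF irr]] unfolding spectrum_def by auto
    then have "e ^ ord g = 1" using eigenvalue_pow_eq_one \<rho>(1)[OF g] rep_pow_ord[OF rep g] by blast
    then have "cmod e = 1" using ord_ge_1[OF assms(1) g] power_eq_1_iff by fastforce
    then show "g \<in> char_center G \<chi>"
      using central_rep_eq_smult_eigenvalue[OF irr g central \<open>eigenvalue (\<rho> g) e\<close>] g \<rho>(2)
      unfolding \<chi> char_center_def by (simp add: norm_mult)
  qed
qed

lemma nested_iff_strict_char_centers:
  assumes "finite (carrier G)"
  shows "nested G \<longleftrightarrow> (\<forall>\<chi> \<in> Irr G. \<forall>\<psi> \<in> Irr G.
    group_center G \<subset> char_center G \<chi> \<longrightarrow> group_center G \<subset> char_center G \<psi> \<longrightarrow>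
    char_center G \<chi> \<subseteq> char_center G \<psi> \<or> char_center G \<psi> \<subseteq> char_center G \<chi>)"
  using group_center_subset_char_center[OF assms] unfolding nested_def by blast

lemma normal_Inter_carrier:
  assumes "\<And>N. N \<in> \<N> \<Longrightarrow> N \<lhd> G"
  shows "carrier G \<inter> \<Inter>\<N> \<lhd> G"
proof -
  have "subgroup (\<Inter>(insert (carrier G) \<N>)) G"
    by (rule subgroups_Inter) (use subgroup_self assms normal_imp_subgroup in auto)
  moreover have "x \<otimes> h \<otimes> inv x \<in> N" if "x \<in> carrier G" "h \<in> carrier G \<inter> \<Inter>\<N>" "N \<in> \<N>" for x h N
    using normal.inv_op_closed2[OF assms[OF that(3)] that(1)] that(2,3) by blast
  ultimately show ?thesis unfolding normal_inv_iff by simp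
qed

lemma K_sub_normal:
  assumes "finite (carrier G)"
  shows "K_sub G \<lhd> G"
proof (cases "is_abelian G")
  case True
  then show ?thesis using normal_Inter_carrier[of "{}"] unfolding K_sub_def by simp
next
  case False
  have "carrier G \<inter> \<Inter>(char_kernel G ` {\<chi> \<in> Irr G. group_center G \<subset> char_center G \<chi>}) \<lhd> G"
    by (rule normal_Inter_carrier) (use char_kernel_normal[OF assms] in blast)
  then show ?thesis using False unfolding K_sub_def by simp
qed

lemma K_sub_subset_char_kernel:
  assumes "\<chi> \<in> Irr G" and "group_center G \<subset> char_center G \<chi>"
  shows "K_sub G \<subseteq> char_kernel G \<chi>"
proof (cases "is_abelian G")
  case True
  then have "group_center G = carrier G" unfolding group_center_def is_abelian_def by auto
  then show ?thesis using assms(2) unfolding char_center_def by auto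
next
  case False
  then show ?thesis using assms unfolding K_sub_def by auto
qed

lemma least_strict_char_center_if_nested:
  assumes "finite (carrier G)" and "nested G"
    and "\<chi>\<^sub>0 \<in> Irr G" and "group_center G \<subset> char_center G \<chi>\<^sub>0"
  obtains \<psi> where "\<psi> \<in> Irr G" and "group_center G \<subset> char_center G \<psi>"
    and "\<And>\<chi>. \<chi> \<in> Irr G \<Longrightarrow> group_center G \<subset> char_center G \<chi> \<Longrightarrow> char_center G \<psi> \<subseteq> char_center G \<chi>"
proof -
  define \<Z> where "\<Z> = char_center G ` {\<chi> \<in> Irr G. group_center G \<subset> char_center G \<chi>}"
  have "finite \<Z>"
    by (rule finite_subset[of _ "Pow (carrier G)"]) (use assms(1) in \<open>auto simp: \<Z>_def char_center_def\<close>)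
  moreover have "\<Z> \<noteq> {}" using assms(3,4) unfolding \<Z>_def by blast
  moreover have "subset.chain UNIV \<Z>"
    unfolding subset_chain_def
  proof (intro conjI ballI)
    fix Z Z' assume "Z \<in> \<Z>" "Z' \<in> \<Z>"
    then obtain \<chi> \<chi>' where "\<chi> \<in> Irr G" "\<chi>' \<in> Irr G" "Z = char_center G \<chi>" "Z' = char_center G \<chi>'"
      unfolding \<Z>_def by blast
    then show "Z \<subseteq> Z' \<or> Z' \<subseteq> Z" using assms(2) unfolding nested_def by simp
  qed simp
  ultimately have "\<Inter>\<Z> \<in> \<Z>" by (rule Inter_in_chain)
  have mem_\<Z>: "Z \<in> \<Z> \<longleftrightarrow> (\<exists>\<chi> \<in> Irr G. group_center G \<subset> char_center G \<chi> \<and> Z = char_center G \<chi>)" for Z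
    unfolding \<Z>_def by blast
  obtain \<psi> where "\<psi> \<in> Irr G" "group_center G \<subset> char_center G \<psi>" "char_center G \<psi> = \<Inter>\<Z>"
    using mem_\<Z>[of "\<Inter>\<Z>"] \<open>\<Inter>\<Z> \<in> \<Z>\<close> by metis
  moreover have "\<Inter>\<Z> \<subseteq> char_center G \<chi>" if "\<chi> \<in> Irr G" "group_center G \<subset> char_center G \<chi>" for \<chi>
    using mem_\<Z>[of "char_center G \<chi>"] that by (intro Inter_lower) blast
  ultimately show thesis using that by simp
qed

lemma K_sub_nontrivial_if_nested:
  assumes "finite (carrier G)" and "nested G" and "\<not> is_abelian G"
  shows "\<exists>c \<in> K_sub G. c \<noteq> \<one>"
proof (cases "\<exists>\<chi> \<in> Irr G. group_center G \<subset> char_center G \<chi>")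
  case False
  then have "K_sub G = carrier G" using assms(3) unfolding K_sub_def by auto
  moreover obtain x y where "x \<in> carrier G" "y \<in> carrier G" "x \<otimes> y \<noteq> y \<otimes> x"
    using assms(3) unfolding is_abelian_def by blast
  moreover have "x \<noteq> \<one>" using \<open>x \<otimes> y \<noteq> y \<otimes> x\<close> \<open>y \<in> carrier G\<close> by auto
  ultimately show ?thesis by blast
next
  case True
  then obtain \<psi> where \<psi>: "\<psi> \<in> Irr G" "group_center G \<subset> char_center G \<psi>"
    and least: "\<And>\<chi>. \<chi> \<in> Irr G \<Longrightarrow> group_center G \<subset> char_center G \<chi> \<Longrightarrow> char_center G \<psi> \<subseteq> char_center G \<chi>"
    using least_strict_char_center_if_nested[OF assms(1,2)] by blast
  obtain a where a: "a \<in> char_center G \<psi>" "a \<notin> group_center G" using \<psi>(2) by blast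
  then have "a \<in> carrier G" unfolding char_center_def by simp
  then obtain b where b: "b \<in> carrier G" "a \<otimes> b \<noteq> b \<otimes> a"
    using a(2) unfolding group_center_def by blast
  define c where "c = a \<otimes> b \<otimes> inv (b \<otimes> a)"
  have "a \<otimes> b = c \<otimes> (b \<otimes> a)" using \<open>a \<in> carrier G\<close> b(1) by (simp add: c_def m_assoc)
  then have "c \<noteq> \<one>" using b \<open>a \<in> carrier G\<close> by auto
  have "c \<in> char_kernel G \<chi>" if "\<chi> \<in> Irr G" "group_center G \<subset> char_center G \<chi>" for \<chi>
  proof -
    have "a \<in> char_center G \<chi>" using least[OF that] a(1) by blast
    then show ?thesis unfolding c_def by (rule commutator_mem_char_kernel[OF assms(1) that(1) _ b(1)])
  qed
  moreover have "c \<in> carrier G" using \<open>a \<in> carrier G\<close> b by (simp add: c_def)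
  ultimately have "c \<in> K_sub G" unfolding K_sub_def if_not_P[OF assms(3)] by blast
  then show ?thesis using \<open>c \<noteq> \<one>\<close> by blast
qed

end

definition inflation :: "('a, 'b) monoid_scheme \<Rightarrow> 'a set \<Rightarrow> ('a set \<Rightarrow> complex) \<Rightarrow> 'a \<Rightarrow> complex" where
  "inflation G N \<chi> = (\<lambda>g \<in> carrier G. \<chi> (N #>\<^bsub>G\<^esub> g))"

context normal
begin

lemma rcos_mem_Mod: "g \<in> carrier G \<Longrightarrow> H #> g \<in> carrier (G Mod H)"
  using rcosetsI subset by (simp add: FactGroup_def)

lemma Mod_carrierE:
  assumes "C \<in> carrier (G Mod H)"
  obtains g where "g \<in> carrier G" and "C = H #> g"
  using assms unfolding FactGroup_def RCOSETS_def by auto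

lemma Mod_carrier_eq_image: "carrier (G Mod H) = (\<lambda>g. H #> g) ` carrier G"
  by (auto simp: FactGroup_def RCOSETS_def)

lemma rcos_one_eq_Mod_one: "H #> \<one> = \<one>\<^bsub>G Mod H\<^esub>"
  using subset by (simp add: FactGroup_def)

lemma finite_Mod_carrier: "finite (carrier G) \<Longrightarrow> finite (carrier (G Mod H))"
  using rcosets_subset_PowG[OF subgroup_axioms] finite_subset by (fastforce simp: FactGroup_def)

lemma inflation_mem_Irr:
  assumes "\<chi> \<in> Irr (G Mod H)"
  shows "inflation G H \<chi> \<in> Irr G"
  using assms
proof (rule IrrE)
  fix n \<sigma> assume irr: "irreducible_rep (G Mod H) n \<sigma>"
    and \<chi>: "\<chi> = (\<lambda>C \<in> carrier (G Mod H). mat_trace (\<sigma> C))"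
  have "group_hom G (G Mod H) (\<lambda>g. H #> g)"
    unfolding group_hom_def group_hom_axioms_def
    using is_group factorgroup_is_group r_coset_hom_Mod by blast
  then have "irreducible_rep G n (\<sigma> \<circ> (\<lambda>g. H #> g))"
    using irreducible_rep_comp_surj_hom Mod_carrier_eq_image irr by blast
  moreover have "inflation G H \<chi> = (\<lambda>g \<in> carrier G. mat_trace ((\<sigma> \<circ> (\<lambda>g. H #> g)) g))"
    unfolding inflation_def \<chi> using rcos_mem_Mod by auto
  ultimately show ?thesis unfolding Irr_def by blast
qed

lemma char_center_inflation:
  "g \<in> carrier G \<Longrightarrow> g \<in> char_center G (inflation G H \<chi>) \<longleftrightarrow> H #> g \<in> char_center (G Mod H) \<chi>"
  unfolding char_center_def inflation_def using rcos_mem_Mod rcos_one_eq_Mod_one by auto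

lemma char_kernel_inflation:
  "g \<in> carrier G \<Longrightarrow> g \<in> char_kernel G (inflation G H \<chi>) \<longleftrightarrow> H #> g \<in> char_kernel (G Mod H) \<chi>"
  unfolding char_kernel_def inflation_def using rcos_mem_Mod rcos_one_eq_Mod_one by auto

lemma subset_char_kernel_inflation: "H \<subseteq> char_kernel G (inflation G H \<chi>)"
proof
  fix h assume "h \<in> H"
  then have "H #> h = \<one>\<^bsub>G Mod H\<^esub>"
    using coset_join2[OF _ subgroup_axioms] subset by (auto simp: FactGroup_def)
  then show "h \<in> char_kernel G (inflation G H \<chi>)"
    using char_kernel_inflation \<open>h \<in> H\<close> subset rcos_mem_Mod by (auto simp: char_kernel_def)
qed

lemma char_center_inflation_subset_iff:
  "char_center G (inflation G H \<chi>) \<subseteq> char_center G (inflation G H \<psi>) \<longleftrightarrow>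
   char_center (G Mod H) \<chi> \<subseteq> char_center (G Mod H) \<psi>"
proof
  assume sub: "char_center G (inflation G H \<chi>) \<subseteq> char_center G (inflation G H \<psi>)"
  show "char_center (G Mod H) \<chi> \<subseteq> char_center (G Mod H) \<psi>"
  proof
    fix C assume C: "C \<in> char_center (G Mod H) \<chi>"
    then obtain g where "g \<in> carrier G" "C = H #> g"
      using Mod_carrierE unfolding char_center_def by blast
    then show "C \<in> char_center (G Mod H) \<psi>" using C sub char_center_inflation by blast
  qed
qed (use char_center_inflation in \<open>auto simp: char_center_def\<close>)

lemma ex_inflation_if_subset_char_kernel:
  assumes "finite (carrier G)" and "\<chi> \<in> Irr G" and "H \<subseteq> char_kernel G \<chi>"
  shows "\<exists>\<chi>' \<in> Irr (G Mod H). \<chi> = inflation G H \<chi>'"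
  using assms(2)
proof (rule IrrE)
  fix n \<rho> assume irr: "irreducible_rep G n \<rho>" and \<chi>: "\<chi> = (\<lambda>g \<in> carrier G. mat_trace (\<rho> g))"
  note rep = irreducible_repD(1)[OF irr] and \<rho> = is_repD[OF irreducible_repD(1)[OF irr]]
  have constant_on_cosets: "\<rho> x = \<rho> g" if "g \<in> carrier G" and "x \<in> H #> g" for g x
  proof -
    obtain k where "k \<in> H" "x = k \<otimes> g" using \<open>x \<in> H #> g\<close> unfolding r_coset_def by blast
    moreover have "\<rho> k = 1\<^sub>m n"
      using assms(3) \<open>k \<in> H\<close> char_kernel_eq_rep_kernel[OF assms(1) rep] unfolding \<chi> by blast
    ultimately show ?thesis using \<rho>(1)[OF that(1)] \<rho>(3)[of k g] that(1) subset by auto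
  qed
  define \<sigma> where "\<sigma> C = \<rho> (SOME x. x \<in> C)" for C
  have \<sigma>: "\<sigma> (H #> g) = \<rho> g" if "g \<in> carrier G" for g
  proof -
    have "(SOME x. x \<in> H #> g) \<in> H #> g" using rcos_self[OF that subgroup_axioms] by (rule someI)
    then show ?thesis using constant_on_cosets that by (simp add: \<sigma>_def)
  qed
  have "is_rep (G Mod H) n \<sigma>"
    unfolding is_rep_def
  proof (intro conjI ballI)
    show "\<sigma> \<one>\<^bsub>G Mod H\<^esub> = 1\<^sub>m n" using \<sigma>[of \<one>] \<rho>(2) rcos_one_eq_Mod_one by simp
  next
    fix C D assume "C \<in> carrier (G Mod H)" "D \<in> carrier (G Mod H)"
    then show "\<sigma> (C \<otimes>\<^bsub>G Mod H\<^esub> D) = \<sigma> C * \<sigma> D"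
      by (elim Mod_carrierE) (auto simp: \<sigma> \<rho>(3) rcos_sum)
  qed (auto elim!: Mod_carrierE simp: \<sigma> \<rho>(1))
  moreover have "\<rho> ` carrier G = \<sigma> ` carrier (G Mod H)"
    unfolding Mod_carrier_eq_image image_image using \<sigma> by (intro image_cong) auto
  ultimately have "irreducible_rep (G Mod H) n \<sigma>" using irreducible_rep_cong_image[OF irr] by blast
  then have "(\<lambda>C \<in> carrier (G Mod H). mat_trace (\<sigma> C)) \<in> Irr (G Mod H)" unfolding Irr_def by blast
  moreover have "\<chi> = inflation G H (\<lambda>C \<in> carrier (G Mod H). mat_trace (\<sigma> C))"
    unfolding \<chi> inflation_def using rcos_mem_Mod by (auto simp: \<sigma>)
  ultimately show ?thesis by blast
qed

lemma nested_Mod_iff: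
  assumes "finite (carrier G)"
  shows "nested (G Mod H) \<longleftrightarrow> (\<forall>\<chi> \<in> Irr G. \<forall>\<psi> \<in> Irr G.
    H \<subseteq> char_kernel G \<chi> \<longrightarrow> H \<subseteq> char_kernel G \<psi> \<longrightarrow>
    char_center G \<chi> \<subseteq> char_center G \<psi> \<or> char_center G \<psi> \<subseteq> char_center G \<chi>)"
    (is "_ \<longleftrightarrow> (\<forall>\<chi> \<in> Irr G. \<forall>\<psi> \<in> Irr G. ?P \<chi> \<psi>)")
proof (intro iffI ballI)
  fix \<chi> \<psi> assume "nested (G Mod H)" "\<chi> \<in> Irr G" "\<psi> \<in> Irr G"
  show "?P \<chi> \<psi>"
  proof (intro impI)
    assume "H \<subseteq> char_kernel G \<chi>" "H \<subseteq> char_kernel G \<psi>"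
    then obtain \<chi>' \<psi>' where "\<chi>' \<in> Irr (G Mod H)" "\<chi> = inflation G H \<chi>'"
      and "\<psi>' \<in> Irr (G Mod H)" "\<psi> = inflation G H \<psi>'"
      using ex_inflation_if_subset_char_kernel[OF assms] \<open>\<chi> \<in> Irr G\<close> \<open>\<psi> \<in> Irr G\<close> by meson
    then show "char_center G \<chi> \<subseteq> char_center G \<psi> \<or> char_center G \<psi> \<subseteq> char_center G \<chi>"
      using \<open>nested (G Mod H)\<close> char_center_inflation_subset_iff unfolding nested_def by simp
  qed
next
  assume comparable: "\<forall>\<chi> \<in> Irr G. \<forall>\<psi> \<in> Irr G. ?P \<chi> \<psi>"
  show "nested (G Mod H)"
    unfolding nested_def
  proof (intro ballI)
    fix \<chi> \<psi> assume "\<chi> \<in> Irr (G Mod H)" "\<psi> \<in> Irr (G Mod H)"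
    then have "?P (inflation G H \<chi>) (inflation G H \<psi>)"
      using comparable inflation_mem_Irr by blast
    then show "char_center (G Mod H) \<chi> \<subseteq> char_center (G Mod H) \<psi> \<or>
        char_center (G Mod H) \<psi> \<subseteq> char_center (G Mod H) \<chi>"
      using subset_char_kernel_inflation char_center_inflation_subset_iff by simp
  qed
qed

lemma K_sub_Mod_normal: "finite (carrier G) \<Longrightarrow> K_sub (G Mod H) \<lhd> G Mod H"
  by (rule group.K_sub_normal[OF factorgroup_is_group finite_Mod_carrier])

lemma normal_Union_K_sub_Mod: "finite (carrier G) \<Longrightarrow> \<Union>(K_sub (G Mod H)) \<lhd> G"
  by (rule factgroup_subgroup_union_normal[OF K_sub_Mod_normal])

lemma subset_Union_K_sub_Mod:
  assumes "finite (carrier G)"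
  shows "H \<subseteq> \<Union>(K_sub (G Mod H))"
proof -
  have "\<one>\<^bsub>G Mod H\<^esub> \<in> K_sub (G Mod H)"
    using subgroup.one_closed normal_imp_subgroup K_sub_Mod_normal[OF assms] by blast
  then show ?thesis by (auto simp: FactGroup_def)
qed

lemma psubset_Union_K_sub_Mod:
  assumes "finite (carrier G)" and "nested (G Mod H)" and "H \<noteq> carrier G"
  shows "H \<subset> \<Union>(K_sub (G Mod H))"
proof (cases "is_abelian (G Mod H)")
  case True
  then have "\<Union>(K_sub (G Mod H)) = carrier G"
    unfolding K_sub_def using rcosets_part_G[OF subgroup_axioms] by (simp add: FactGroup_def)
  then show ?thesis using assms(3) subset by blast
next
  case False
  interpret Mod: group "G Mod H" by (rule factorgroup_is_group)
  obtain C where C: "C \<in> K_sub (G Mod H)" "C \<noteq> \<one>\<^bsub>G Mod H\<^esub>"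
    using Mod.K_sub_nontrivial_if_nested[OF finite_Mod_carrier[OF assms(1)] assms(2) False] by blast
  then have "C \<in> carrier (G Mod H)" using False unfolding K_sub_def by simp
  then obtain x where x: "x \<in> carrier G" "C = H #> x" by (rule Mod_carrierE)
  then have "x \<in> \<Union>(K_sub (G Mod H))" using C(1) rcos_self[OF _ subgroup_axioms] by blast
  moreover have "x \<notin> H" using C(2) x coset_join2[OF x(1) subgroup_axioms] by (auto simp: FactGroup_def)
  ultimately show ?thesis using subset_Union_K_sub_Mod[OF assms(1)] by blast
qed

lemma nested_Mod_if_nested_Mod_K_sub:
  assumes fin: "finite (carrier G)" and "nested (G Mod \<Union>(K_sub (G Mod H)))"
  shows "nested (G Mod H)"
proof -
  interpret Mod: group "G Mod H" by (rule factorgroup_is_group)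
  interpret M: normal "\<Union>(K_sub (G Mod H))" G by (rule normal_Union_K_sub_Mod[OF fin])
  have K_sub: "subgroup (K_sub (G Mod H)) (G Mod H)"
    using K_sub_Mod_normal[OF fin] normal_imp_subgroup by blast
  have M_kernel: "\<Union>(K_sub (G Mod H)) \<subseteq> char_kernel G (inflation G H \<phi>)"
    if "\<phi> \<in> Irr (G Mod H)" and "group_center (G Mod H) \<subset> char_center (G Mod H) \<phi>" for \<phi>
    using Mod.K_sub_subset_char_kernel[OF that] char_kernel_inflation
    unfolding factgroup_subgroup_union_char[OF K_sub] by blast
  show ?thesis
    unfolding Mod.nested_iff_strict_char_centers[OF finite_Mod_carrier[OF fin]]
  proof (intro ballI impI)
    fix \<chi> \<psi> assume \<chi>: "\<chi> \<in> Irr (G Mod H)" "group_center (G Mod H) \<subset> char_center (G Mod H) \<chi>"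
      and \<psi>: "\<psi> \<in> Irr (G Mod H)" "group_center (G Mod H) \<subset> char_center (G Mod H) \<psi>"
    have "char_center G (inflation G H \<chi>) \<subseteq> char_center G (inflation G H \<psi>) \<or>
        char_center G (inflation G H \<psi>) \<subseteq> char_center G (inflation G H \<chi>)"
      using assms(2)[unfolded M.nested_Mod_iff[OF fin], rule_format,
          OF inflation_mem_Irr[OF \<chi>(1)] inflation_mem_Irr[OF \<psi>(1)] M_kernel[OF \<chi>] M_kernel[OF \<psi>]] .
    then show "char_center (G Mod H) \<chi> \<subseteq> char_center (G Mod H) \<psi> \<or>
        char_center (G Mod H) \<psi> \<subseteq> char_center (G Mod H) \<chi>"
      unfolding char_center_inflation_subset_iff .
  qed
qed

end

context group
begin

lemma K_chain_normal:
  assumes "finite (carrier G)"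
  shows "K_chain G i \<lhd> G"
proof (induction i)
  case 0
  show ?case using one_is_normal by simp
next
  case (Suc i)
  show ?case using normal.normal_Union_K_sub_Mod[OF Suc assms] by simp
qed

lemma K_chain_subset_Suc:
  assumes "finite (carrier G)"
  shows "K_chain G i \<subseteq> K_chain G (Suc i)"
  using normal.subset_Union_K_sub_Mod[OF K_chain_normal[OF assms] assms] by simp

lemma K_chain_subset_carrier:
  assumes "finite (carrier G)"
  shows "K_chain G i \<subseteq> carrier G"
  using K_chain_normal[OF assms] normal_imp_subgroup subgroup.subset by blast

lemma K_infty_eq_carrier_iff:
  assumes "finite (carrier G)"
  shows "K_infty G = carrier G \<longleftrightarrow> (\<exists>n. K_chain G n = carrier G)"
proof
  assume "K_infty G = carrier G"
  have "K_chain G i \<subseteq> K_chain G j" if "i \<le> j" for i j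
    using lift_Suc_mono_le[of "K_chain G", OF K_chain_subset_Suc[OF assms] that] .
  then have "subset.chain UNIV (range (K_chain G))"
    unfolding subset_chain_def using nat_le_linear by blast
  then obtain B where "B \<in> range (K_chain G)" "carrier G \<subseteq> B"
    using finite_subset_Union_chain[OF assms, of "range (K_chain G)"] \<open>K_infty G = carrier G\<close>
    unfolding K_infty_def by blast
  then show "\<exists>n. K_chain G n = carrier G" using K_chain_subset_carrier[OF assms] by blast
qed (use K_chain_subset_carrier[OF assms] in \<open>auto simp: K_infty_def\<close>)

lemma K_chain_eq_carrier_if_nested:
  assumes "finite (carrier G)" and "nested G"
  shows "K_chain G (card (carrier G)) = carrier G"
proof (rule chain_reaches_finite_bound[of "carrier G" "K_chain G"])
  show "finite (carrier G)" by fact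
  show "K_chain G i \<subseteq> carrier G" "K_chain G i \<subseteq> K_chain G (Suc i)" for i
    using K_chain_subset_carrier[OF assms(1)] K_chain_subset_Suc[OF assms(1)] by blast+
next
  fix i assume "K_chain G i \<noteq> carrier G"
  moreover have "nested (G Mod K_chain G i)"
    using assms(2) normal.nested_Mod_iff[OF K_chain_normal[OF assms(1)] assms(1)]
    unfolding nested_def by blast
  ultimately show "K_chain G i \<subset> K_chain G (Suc i)"
    using normal.psubset_Union_K_sub_Mod[OF K_chain_normal[OF assms(1)] assms(1)] by simp
qed

lemma nested_if_K_chain_eq_carrier:
  assumes "finite (carrier G)" and "K_chain G n = carrier G"
  shows "nested G"
proof -
  have "nested (G Mod K_chain G i)" if "i \<le> n" for i
    using that
  proof (induction rule: inc_induct)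
    case base
    have "char_kernel G \<chi> \<subseteq> char_center G \<chi>" for \<chi>
      unfolding char_kernel_def char_center_def by auto
    then show ?case
      using assms(2) normal.nested_Mod_iff[OF K_chain_normal[OF assms(1)] assms(1), of n]
      unfolding char_center_def by blast
  next
    case (step i)
    then show ?case
      using normal.nested_Mod_if_nested_Mod_K_sub[OF K_chain_normal[OF assms(1)] assms(1)] by simp
  qed
  then have "nested (G Mod {\<one>})" by fastforce
  then show ?thesis
    using normal.nested_Mod_iff[OF one_is_normal assms(1)] unfolding nested_def char_kernel_def by auto
qed

end

theorem theoremE:
  fixes G :: "('a, 'b) monoid_scheme"
  assumes "group G" and "finite (carrier G)"
  shows "nested G \<longleftrightarrow> K_infty G = carrier G"
proof -
  interpret group G by fact
  show ?thesis
    unfolding K_infty_eq_carrier_iff[OF assms(2)]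
    using K_chain_eq_carrier_if_nested[OF assms(2)] nested_if_K_chain_eq_carrier[OF assms(2)] by blast
qed

end
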